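(* Let $(H,\leq,\ast)$ be a discrete $\omega$-dimensional poc-set, and let $\Sigma,\Xi$ be almost-equality classes in $H^\circ$. If $\Xi$ intersects the closure $\overline{\Sigma}$ of $\Sigma$ in $H^\circ$, then $\Xi\subseteq\overline{\Sigma}$.
   Context: Poc-set: poset with minimum $0$ and order-reversing involution $\ast$ with $h\le h^\ast\Rightarrow h=0$. Discrete: intervals between proper elements finite. Transverse: none of $h\le k,h^\ast\le k,h\le k^\ast,h^\ast\le k^\ast$; $\omega$-dimensional: no infinite transverse subset. Ultrafilter: $\alpha\subseteq H$ with exactly one of $h,h^\ast$ in $\alpha$ for each $h$, no $h,k\in\alpha$ with $h\le k^\ast$; $H^\circ$ the set of ultrafilters with the topology induced from $2^H$ (product topology). $\alpha,\beta$ are almost equal if $\alpha\smallsetminus\beta$ is finite. *)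

theory Defs
  imports "HOL-Analysis.Analysis"
begin

definition pocset :: "('a \<Rightarrow> 'a \<Rightarrow> bool) \<Rightarrow> ('a \<Rightarrow> 'a) \<Rightarrow> 'a \<Rightarrow> bool" where
  "pocset le star z \<longleftrightarrow>
     (\<forall>h. le h h) \<and>
     (\<forall>h k. le h k \<and> le k h \<longrightarrow> h = k) \<and>
     (\<forall>h k l. le h k \<and> le k l \<longrightarrow> le h l) \<and>
     (\<forall>h. le z h) \<and>
     (\<forall>h. star (star h) = h) \<and>
     (\<forall>h k. le h k \<longrightarrow> le (star k) (star h)) \<and>
     (\<forall>h. le h (star h) \<longrightarrow> h = z)"

definition proper_elt :: "('a \<Rightarrow> 'a) \<Rightarrow> 'a \<Rightarrow> 'a \<Rightarrow> bool" where
  "proper_elt star z h \<longleftrightarrow> h \<noteq> z \<and> h \<noteq> star z"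

definition discrete_pocset :: "('a \<Rightarrow> 'a \<Rightarrow> bool) \<Rightarrow> ('a \<Rightarrow> 'a) \<Rightarrow> 'a \<Rightarrow> bool" where
  "discrete_pocset le star z \<longleftrightarrow>
     (\<forall>h k. proper_elt star z h \<and> proper_elt star z k \<longrightarrow> finite {x. le h x \<and> le x k})"

definition transverse :: "('a \<Rightarrow> 'a \<Rightarrow> bool) \<Rightarrow> ('a \<Rightarrow> 'a) \<Rightarrow> 'a \<Rightarrow> 'a \<Rightarrow> bool" where
  "transverse le star h k \<longleftrightarrow>
     \<not> le h k \<and> \<not> le (star h) k \<and> \<not> le h (star k) \<and> \<not> le (star h) (star k)"

definition omega_dimensional :: "('a \<Rightarrow> 'a \<Rightarrow> bool) \<Rightarrow> ('a \<Rightarrow> 'a) \<Rightarrow> bool" where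
  "omega_dimensional le star \<longleftrightarrow>
     \<not> (\<exists>S. infinite S \<and> (\<forall>h\<in>S. \<forall>k\<in>S. h \<noteq> k \<longrightarrow> transverse le star h k))"

definition ultrafilter :: "('a \<Rightarrow> 'a \<Rightarrow> bool) \<Rightarrow> ('a \<Rightarrow> 'a) \<Rightarrow> 'a set \<Rightarrow> bool" where
  "ultrafilter le star \<alpha> \<longleftrightarrow>
     (\<forall>h. (h \<in> \<alpha>) \<noteq> (star h \<in> \<alpha>)) \<and>
     (\<forall>h\<in>\<alpha>. \<forall>k\<in>\<alpha>. \<not> le h (star k))"

definition Hcirc :: "('a \<Rightarrow> 'a \<Rightarrow> bool) \<Rightarrow> ('a \<Rightarrow> 'a) \<Rightarrow> 'a set set" where
  "Hcirc le star = {\<alpha>. ultrafilter le star \<alpha>}"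

text \<open>The topology on subsets of H induced from 2^H (product of discrete two-point spaces),
  transported along the identification of a subset with its characteristic function.\<close>
definition cantor_top :: "'a set topology" where
  "cantor_top = pullback_topology UNIV (\<lambda>\<alpha> h. h \<in> \<alpha>)
                  (product_topology (\<lambda>_. discrete_topology (UNIV :: bool set)) UNIV)"

definition Hcirc_top :: "('a \<Rightarrow> 'a \<Rightarrow> bool) \<Rightarrow> ('a \<Rightarrow> 'a) \<Rightarrow> 'a set topology" where
  "Hcirc_top le star = subtopology cantor_top (Hcirc le star)"

definition almost_equal :: "'a set \<Rightarrow> 'a set \<Rightarrow> bool" where
  "almost_equal \<alpha> \<beta> \<longleftrightarrow> finite (\<alpha> - \<beta>)"

definition almost_equality_class :: "('a \<Rightarrow> 'a \<Rightarrow> bool) \<Rightarrow> ('a \<Rightarrow> 'a) \<Rightarrow> 'a set set \<Rightarrow> bool" where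
  "almost_equality_class le star \<Sigma> \<longleftrightarrow>
     (\<exists>\<alpha>\<in>Hcirc le star. \<Sigma> = {\<beta>\<in>Hcirc le star. almost_equal \<alpha> \<beta>})"

end

(*
  Since Xi is a single almost-equality class, it suffices to show that the closure of Sigma
  contains every ultrafilter eta almost equal to a point xi of the closure.  This goes by
  induction on |eta - xi|: for a maximal a in eta - xi, the element b = a* is minimal in xi,
  and swapping b for a yields an ultrafilter that is again in the closure.

  To approximate the swapped ultrafilter on a finite set F, take sigma in Sigma agreeing with xi
  on F and b, and flip the whole down-set D = {k in sigma. k <= b}, i.e. replace D by D*.  The
  result is an ultrafilter, agrees with the swap on F, and lies in Sigma because D is finite:
  the maximal elements of D - {b} are pairwise transverse, hence finitely many by
  omega-dimensionality; by discreteness every element of D - {b} lies below one of them; and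
  below each of them sigma has only finitely many elements, since they are not in xi and sigma
  is almost equal to an approximant of xi that omits them.
*)
theory Submission
  imports Defs
begin

lemma topspace_cantor_top [simp]: "topspace cantor_top = UNIV"
  by (simp add: cantor_top_def topspace_pullback_topology)

lemma openin_cantor_top_agree:
  assumes "finite F"
  shows "openin cantor_top {\<beta>. \<beta> \<inter> F = \<alpha> \<inter> F}"
proof -
  define U where "U i = (if i \<in> F then {i \<in> \<alpha>} else UNIV)" for i
  have "openin (product_topology (\<lambda>_. discrete_topology UNIV) UNIV) (\<Pi>\<^sub>E i\<in>UNIV. U i)"
    by (rule product_topology_basis) (auto simp: U_def intro: finite_subset[OF _ assms])
  moreover have "(\<lambda>h. h \<in> \<beta>) \<in> (\<Pi>\<^sub>E i\<in>UNIV. U i) \<longleftrightarrow> \<beta> \<inter> F = \<alpha> \<inter> F" for \<beta>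
  proof -
    have "(\<lambda>h. h \<in> \<beta>) \<in> (\<Pi>\<^sub>E i\<in>UNIV. U i) \<longleftrightarrow> (\<forall>i\<in>F. i \<in> \<beta> \<longleftrightarrow> i \<in> \<alpha>)"
      by (auto simp: U_def PiE_iff)
    also have "\<dots> \<longleftrightarrow> \<beta> \<inter> F = \<alpha> \<inter> F"
      by blast
    finally show ?thesis .
  qed
  then have "{\<beta>. \<beta> \<inter> F = \<alpha> \<inter> F} = (\<lambda>\<beta> h. h \<in> \<beta>) -` (\<Pi>\<^sub>E i\<in>UNIV. U i)"
    by auto
  ultimately show ?thesis
    unfolding cantor_top_def openin_pullback_topology by auto
qed

lemma openin_cantor_top:
  "openin cantor_top T \<longleftrightarrow> (\<forall>\<alpha>\<in>T. \<exists>F. finite F \<and> {\<beta>. \<beta> \<inter> F = \<alpha> \<inter> F} \<subseteq> T)"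
proof
  assume "openin cantor_top T"
  then obtain W where W: "openin (product_topology (\<lambda>_. discrete_topology UNIV) UNIV) W"
    and T: "T = (\<lambda>\<alpha> h. h \<in> \<alpha>) -` W"
    unfolding cantor_top_def openin_pullback_topology by auto
  show "\<forall>\<alpha>\<in>T. \<exists>F. finite F \<and> {\<beta>. \<beta> \<inter> F = \<alpha> \<inter> F} \<subseteq> T"
  proof
    fix \<alpha> assume "\<alpha> \<in> T"
    then obtain U where U: "finite {i. U i \<noteq> UNIV}" "(\<lambda>h. h \<in> \<alpha>) \<in> Pi\<^sub>E UNIV U"
      "Pi\<^sub>E UNIV U \<subseteq> W"
      using W T unfolding openin_product_topology_alt by auto
    define F where "F = {i. U i \<noteq> UNIV}"
    have "{\<beta>. \<beta> \<inter> F = \<alpha> \<inter> F} \<subseteq> T"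
    proof
      fix \<beta> assume "\<beta> \<in> {\<beta>. \<beta> \<inter> F = \<alpha> \<inter> F}"
      then have agree: "\<beta> \<inter> F = \<alpha> \<inter> F" by simp
      have "(i \<in> \<beta>) \<in> U i" for i
      proof (cases "i \<in> F")
        case True
        then have "(i \<in> \<beta>) = (i \<in> \<alpha>)" using agree by blast
        then show ?thesis using U(2) by (simp add: PiE_iff)
      qed (simp add: F_def)
      then show "\<beta> \<in> T" using U(3) T by (auto simp: PiE_iff)
    qed
    then show "\<exists>F. finite F \<and> {\<beta>. \<beta> \<inter> F = \<alpha> \<inter> F} \<subseteq> T" using U(1) F_def by blast
  qed
next
  assume nbhds: "\<forall>\<alpha>\<in>T. \<exists>F. finite F \<and> {\<beta>. \<beta> \<inter> F = \<alpha> \<inter> F} \<subseteq> T"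
  show "openin cantor_top T"
  proof (subst openin_subopen, intro ballI)
    fix \<alpha> assume "\<alpha> \<in> T"
    then obtain F where "finite F" "{\<beta>. \<beta> \<inter> F = \<alpha> \<inter> F} \<subseteq> T" using nbhds by blast
    then show "\<exists>U. openin cantor_top U \<and> \<alpha> \<in> U \<and> U \<subseteq> T"
      using openin_cantor_top_agree by blast
  qed
qed

lemma in_closure_of_cantor_top:
  "\<alpha> \<in> cantor_top closure_of S \<longleftrightarrow> (\<forall>F. finite F \<longrightarrow> (\<exists>\<sigma>\<in>S. \<sigma> \<inter> F = \<alpha> \<inter> F))"
proof
  assume closure: "\<alpha> \<in> cantor_top closure_of S"
  show "\<forall>F. finite F \<longrightarrow> (\<exists>\<sigma>\<in>S. \<sigma> \<inter> F = \<alpha> \<inter> F)"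
  proof (intro allI impI)
    fix F :: "'a set" assume "finite F"
    define N where "N = {\<beta>. \<beta> \<inter> F = \<alpha> \<inter> F}"
    have "openin cantor_top N" "\<alpha> \<in> N"
      using openin_cantor_top_agree[OF \<open>finite F\<close>] by (simp_all add: N_def)
    then obtain \<sigma> where "\<sigma> \<in> S" "\<sigma> \<in> N"
      using closure unfolding in_closure_of by blast
    then show "\<exists>\<sigma>\<in>S. \<sigma> \<inter> F = \<alpha> \<inter> F"
      by (auto simp: N_def)
  qed
next
  assume approx: "\<forall>F. finite F \<longrightarrow> (\<exists>\<sigma>\<in>S. \<sigma> \<inter> F = \<alpha> \<inter> F)"
  show "\<alpha> \<in> cantor_top closure_of S"
    unfolding in_closure_of
  proof (intro conjI allI impI)
    fix T assume "\<alpha> \<in> T \<and> openin cantor_top T"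
    then obtain F where "finite F" and F: "{\<beta>. \<beta> \<inter> F = \<alpha> \<inter> F} \<subseteq> T"
      unfolding openin_cantor_top by blast
    obtain \<sigma> where "\<sigma> \<in> S" "\<sigma> \<inter> F = \<alpha> \<inter> F"
      using approx[rule_format, OF \<open>finite F\<close>] by blast
    then show "\<exists>\<sigma>. \<sigma> \<in> S \<and> \<sigma> \<in> T"
      using F by blast
  qed simp
qed

lemma in_closure_of_Hcirc_top:
  assumes "S \<subseteq> Hcirc le star"
  shows "\<alpha> \<in> Hcirc_top le star closure_of S \<longleftrightarrow>
    \<alpha> \<in> Hcirc le star \<and> (\<forall>F. finite F \<longrightarrow> (\<exists>\<sigma>\<in>S. \<sigma> \<inter> F = \<alpha> \<inter> F))"
  using assms unfolding Hcirc_top_def closure_of_subtopology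
  by (simp add: Int_absorb1 in_closure_of_cantor_top)

lemma ultrafilter_if_in_closure_of_Hcirc_top:
  "\<alpha> \<in> Hcirc_top le star closure_of S \<Longrightarrow> ultrafilter le star \<alpha>"
  using closure_of_subset_topspace[of "Hcirc_top le star" S]
  by (auto simp: Hcirc_top_def Hcirc_def)

lemma in_closure_of_Hcirc_top_agree:
  assumes "\<alpha> \<in> Hcirc_top le star closure_of S" and "S \<subseteq> Hcirc le star" and "finite F"
  shows "\<exists>\<sigma>\<in>S. \<sigma> \<inter> F = \<alpha> \<inter> F"
  using assms in_closure_of_Hcirc_top by meson

lemma almost_equal_trans:
  "almost_equal \<alpha> \<beta> \<Longrightarrow> almost_equal \<beta> \<gamma> \<Longrightarrow> almost_equal \<alpha> \<gamma>"
  unfolding almost_equal_def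
  by (rule finite_subset[of _ "(\<alpha> - \<beta>) \<union> (\<beta> - \<gamma>)"]) auto

lemma almost_equality_class_subset: "almost_equality_class le star \<Sigma> \<Longrightarrow> \<Sigma> \<subseteq> Hcirc le star"
  unfolding almost_equality_class_def by blast

lemma almost_equality_class_ultrafilter:
  "almost_equality_class le star \<Sigma> \<Longrightarrow> \<sigma> \<in> \<Sigma> \<Longrightarrow> ultrafilter le star \<sigma>"
  using almost_equality_class_subset by (auto simp: Hcirc_def)

locale poc_set =
  fixes le :: "'a \<Rightarrow> 'a \<Rightarrow> bool" (infix "\<preceq>" 50) and star :: "'a \<Rightarrow> 'a" and z :: 'a
  assumes pocset: "pocset le star z"
begin

lemma refl [simp]: "h \<preceq> h"
  using pocset unfolding pocset_def by blast

lemma antisym: "h \<preceq> k \<Longrightarrow> k \<preceq> h \<Longrightarrow> h = k"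
  using pocset unfolding pocset_def by blast

lemma trans: "h \<preceq> k \<Longrightarrow> k \<preceq> l \<Longrightarrow> h \<preceq> l"
  using pocset unfolding pocset_def by blast

lemma zero_le: "z \<preceq> h"
  using pocset unfolding pocset_def by blast

lemma star_star [simp]: "star (star h) = h"
  using pocset unfolding pocset_def by blast

lemma star_antimono: "h \<preceq> k \<Longrightarrow> star k \<preceq> star h"
  using pocset unfolding pocset_def by blast

lemma le_star_self_imp_zero: "h \<preceq> star h \<Longrightarrow> h = z"
  using pocset unfolding pocset_def by blast

lemma star_le_star_iff [simp]: "star h \<preceq> star k \<longleftrightarrow> k \<preceq> h"
  by (metis star_antimono star_star)

lemma le_star_commute: "h \<preceq> star k \<longleftrightarrow> k \<preceq> star h"
  by (metis star_le_star_iff star_star)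

lemma star_eq_iff [simp]: "star h = star k \<longleftrightarrow> h = k"
  by (metis star_star)

lemma mem_star_image_iff [simp]: "h \<in> star ` A \<longleftrightarrow> star h \<in> A"
  by (metis image_iff star_star)

lemma not_star_le_self: "h \<noteq> star z \<Longrightarrow> \<not> star h \<preceq> h"
  by (metis le_star_self_imp_zero star_star)

lemma star_neq_self: "h \<noteq> star z \<Longrightarrow> star h \<noteq> h"
  by (metis not_star_le_self refl)

lemma finite_has_maximal:
  assumes "finite A" and "A \<noteq> {}"
  shows "\<exists>m\<in>A. \<forall>y\<in>A. m \<preceq> y \<longrightarrow> y = m"
proof -
  have "asymp_on A (\<lambda>x y. x \<preceq> y \<and> x \<noteq> y)"
    by (auto simp: asymp_on_def dest: antisym)
  moreover have "transp_on A (\<lambda>x y. x \<preceq> y \<and> x \<noteq> y)"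
    by (auto simp: transp_on_def dest: antisym intro: trans)
  ultimately show ?thesis
    using Finite_Set.bex_max_element[OF assms(1) _ _ assms(2)] by blast
qed

lemma ultrafilter_star_iff: "ultrafilter le star \<alpha> \<Longrightarrow> star h \<in> \<alpha> \<longleftrightarrow> h \<notin> \<alpha>"
  unfolding ultrafilter_def by blast

lemma ultrafilter_consistent: "ultrafilter le star \<alpha> \<Longrightarrow> h \<in> \<alpha> \<Longrightarrow> k \<in> \<alpha> \<Longrightarrow> \<not> h \<preceq> star k"
  unfolding ultrafilter_def by blast

lemma ultrafilter_upward_closed: "ultrafilter le star \<alpha> \<Longrightarrow> h \<in> \<alpha> \<Longrightarrow> h \<preceq> k \<Longrightarrow> k \<in> \<alpha>"
  by (metis ultrafilter_consistent ultrafilter_star_iff star_star)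

lemma zero_notin_ultrafilter: "ultrafilter le star \<alpha> \<Longrightarrow> z \<notin> \<alpha>"
  by (metis ultrafilter_consistent zero_le)

lemma ultrafilter_subset_imp_eq:
  "ultrafilter le star \<alpha> \<Longrightarrow> ultrafilter le star \<beta> \<Longrightarrow> \<alpha> \<subseteq> \<beta> \<Longrightarrow> \<alpha> = \<beta>"
  by (metis subsetD subset_antisym subsetI ultrafilter_star_iff)

lemma ultrafilter_diff_eq_star_image:
  assumes "ultrafilter le star \<alpha>" and "ultrafilter le star \<beta>"
  shows "\<beta> - \<alpha> = star ` (\<alpha> - \<beta>)"
proof (rule set_eqI)
  fix h
  show "h \<in> \<beta> - \<alpha> \<longleftrightarrow> h \<in> star ` (\<alpha> - \<beta>)"
    using ultrafilter_star_iff[OF assms(1), of h] ultrafilter_star_iff[OF assms(2), of h]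
      mem_star_image_iff[of h "\<alpha> - \<beta>"] by blast
qed

lemma almost_equal_sym:
  "ultrafilter le star \<alpha> \<Longrightarrow> ultrafilter le star \<beta> \<Longrightarrow> almost_equal \<alpha> \<beta> \<Longrightarrow> almost_equal \<beta> \<alpha>"
  unfolding almost_equal_def by (metis finite_imageI ultrafilter_diff_eq_star_image)

lemma almost_equality_class_almost_equal:
  assumes "almost_equality_class le star \<Sigma>" and "\<sigma> \<in> \<Sigma>" and "\<tau> \<in> \<Sigma>"
  shows "almost_equal \<sigma> \<tau>"
proof -
  obtain \<alpha> where "\<alpha> \<in> Hcirc le star" and \<Sigma>: "\<Sigma> = {\<beta> \<in> Hcirc le star. almost_equal \<alpha> \<beta>}"
    using assms(1) unfolding almost_equality_class_def by blast
  then have "almost_equal \<sigma> \<alpha>"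
    using assms(2) almost_equal_sym by (auto simp: Hcirc_def)
  moreover have "almost_equal \<alpha> \<tau>"
    using assms(3) \<Sigma> by blast
  ultimately show ?thesis
    by (rule almost_equal_trans)
qed

lemma almost_equality_class_closed:
  assumes "almost_equality_class le star \<Sigma>" and "\<sigma> \<in> \<Sigma>"
    and "ultrafilter le star \<tau>" and "almost_equal \<sigma> \<tau>"
  shows "\<tau> \<in> \<Sigma>"
proof -
  obtain \<alpha> where \<Sigma>: "\<Sigma> = {\<beta> \<in> Hcirc le star. almost_equal \<alpha> \<beta>}"
    using assms(1) unfolding almost_equality_class_def by blast
  then have "almost_equal \<alpha> \<tau>"
    using assms(2,4) almost_equal_trans by blast
  then show ?thesis
    using assms(3) \<Sigma> by (simp add: Hcirc_def)
qed

lemma proper_elt_if_mem_below: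
  assumes "ultrafilter le star \<sigma>" and "x \<in> \<sigma>" and "x \<preceq> b" and "b \<noteq> star z"
  shows "proper_elt star z x"
proof -
  have "x \<noteq> star z"
  proof
    assume "x = star z"
    then have "star b \<preceq> z"
      using star_antimono[OF \<open>x \<preceq> b\<close>] by simp
    then have "star b = z"
      using antisym zero_le by blast
    then show False
      using \<open>b \<noteq> star z\<close> by auto
  qed
  then show ?thesis
    using assms zero_notin_ultrafilter by (auto simp: proper_elt_def)
qed

lemma transverse_if_incomparable_below:
  assumes \<sigma>: "ultrafilter le star \<sigma>" and "b \<noteq> star z"
    and "m \<in> \<sigma>" "n \<in> \<sigma>" "m \<preceq> b" "n \<preceq> b" "\<not> m \<preceq> n" "\<not> n \<preceq> m"
  shows "transverse le star m n"
proof -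
  have "\<not> star m \<preceq> n"
  proof
    assume "star m \<preceq> n"
    then have "star m \<preceq> b" using \<open>n \<preceq> b\<close> by (rule trans)
    then have "star b \<preceq> b" using \<open>m \<preceq> b\<close> by (metis star_antimono trans)
    then show False using not_star_le_self \<open>b \<noteq> star z\<close> by blast
  qed
  then show ?thesis
    using assms ultrafilter_consistent[OF \<sigma>] unfolding transverse_def by auto
qed

lemma ultrafilter_swap_minimal:
  assumes \<xi>: "ultrafilter le star \<xi>" and "b \<in> \<xi>" and min: "\<forall>k\<in>\<xi>. k \<preceq> b \<longrightarrow> k = b"
    and "b \<noteq> star z"
  shows "ultrafilter le star (insert (star b) (\<xi> - {b}))"
  unfolding ultrafilter_def
proof (intro conjI allI ballI)
  fix h
  show "(h \<in> insert (star b) (\<xi> - {b})) \<noteq> (star h \<in> insert (star b) (\<xi> - {b}))"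
    using star_neq_self[OF \<open>b \<noteq> star z\<close>] ultrafilter_star_iff[OF \<xi>, of h]
    by (cases "h = b \<or> h = star b") auto
next
  fix h k assume h: "h \<in> insert (star b) (\<xi> - {b})" and k: "k \<in> insert (star b) (\<xi> - {b})"
  show "\<not> h \<preceq> star k"
  proof
    assume "h \<preceq> star k"
    then consider "star b \<preceq> b" | "k \<in> \<xi>" "k \<noteq> b" "k \<preceq> b"
      | "h \<in> \<xi>" "h \<noteq> b" "h \<preceq> b" | "h \<in> \<xi>" "k \<in> \<xi>" "h \<preceq> star k"
      using h k by auto
    then show False
      using not_star_le_self[OF \<open>b \<noteq> star z\<close>] min ultrafilter_consistent[OF \<xi>] by cases auto
  qed
qed

lemma ultrafilter_flip_down_set:
  assumes \<sigma>: "ultrafilter le star \<sigma>" and "b \<noteq> star z"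
  defines "D \<equiv> {k \<in> \<sigma>. k \<preceq> b}"
  shows "ultrafilter le star ((\<sigma> - D) \<union> star ` D)"
  unfolding ultrafilter_def
proof (intro conjI allI ballI)
  fix h
  show "(h \<in> (\<sigma> - D) \<union> star ` D) \<noteq> (star h \<in> (\<sigma> - D) \<union> star ` D)"
    using ultrafilter_star_iff[OF \<sigma>, of h] by (auto simp: D_def)
next
  fix h k assume h: "h \<in> (\<sigma> - D) \<union> star ` D" and k: "k \<in> (\<sigma> - D) \<union> star ` D"
  show "\<not> h \<preceq> star k"
  proof
    assume le: "h \<preceq> star k"
    consider "h \<in> \<sigma> - D" "k \<in> \<sigma> - D" | "star h \<in> D" "star k \<in> D"
      | "star h \<in> D" "k \<in> \<sigma> - D" | "h \<in> \<sigma> - D" "star k \<in> D"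
      using h k by auto
    then show False
    proof cases
      case 1
      then show ?thesis using le ultrafilter_consistent[OF \<sigma>] by blast
    next
      case 2
      then have "star b \<preceq> h"
        by (metis D_def mem_Collect_eq star_antimono star_star)
      moreover have "h \<preceq> b"
        using 2 le trans by (auto simp: D_def)
      ultimately show ?thesis using not_star_le_self[OF \<open>b \<noteq> star z\<close>] trans by blast
    next
      case 3
      have "k \<preceq> star h"
        using le le_star_commute by blast
      then have "k \<preceq> b"
        using 3 trans by (auto simp: D_def)
      then show ?thesis using 3 by (simp add: D_def)
    next
      case 4
      then have "h \<preceq> b"
        using le trans by (auto simp: D_def)
      then show ?thesis using 4 by (simp add: D_def)
    qed
  qed
qed

lemma flip_down_set_agrees_with_swap:
  assumes \<sigma>: "ultrafilter le star \<sigma>" and \<xi>: "ultrafilter le star \<xi>"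
    and "b \<in> \<xi>" and min: "\<forall>k\<in>\<xi>. k \<preceq> b \<longrightarrow> k = b" and "b \<noteq> star z"
    and agree: "\<sigma> \<inter> insert b F = \<xi> \<inter> insert b F"
  defines "D \<equiv> {k \<in> \<sigma>. k \<preceq> b}"
  shows "((\<sigma> - D) \<union> star ` D) \<inter> F = insert (star b) (\<xi> - {b}) \<inter> F"
proof -
  have "b \<in> \<sigma>"
    using agree \<open>b \<in> \<xi>\<close> by blast
  then have "b \<in> D" and "star b \<notin> D"
    using ultrafilter_star_iff[OF \<sigma>, of b] by (auto simp: D_def)
  have "h \<in> (\<sigma> - D) \<union> star ` D \<longleftrightarrow> h \<in> insert (star b) (\<xi> - {b})" if "h \<in> F" for h
  proof -
    consider "h = b" | "h = star b" | "h \<noteq> b" "h \<noteq> star b"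
      by blast
    then show ?thesis
    proof cases
      case 1
      then show ?thesis
        using \<open>b \<in> D\<close> \<open>star b \<notin> D\<close> star_neq_self[OF \<open>b \<noteq> star z\<close>] by simp
    next
      case 2
      then show ?thesis
        using \<open>b \<in> D\<close> by simp
    next
      case 3
      have h_agree: "h \<in> \<sigma> \<longleftrightarrow> h \<in> \<xi>"
        using agree \<open>h \<in> F\<close> by blast
      then have "star h \<in> \<sigma> \<longleftrightarrow> star h \<in> \<xi>"
        using ultrafilter_star_iff[OF \<sigma>, of h] ultrafilter_star_iff[OF \<xi>, of h] by blast
      then have "h \<notin> D" and "star h \<notin> D"
        using min 3 h_agree by (auto simp: D_def)
      then show ?thesis
        using 3 h_agree by simp
    qed
  qed
  then show ?thesis
    by blast
qed

lemma minimal_star_of_maximal_diff: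
  assumes \<eta>: "ultrafilter le star \<eta>" and \<xi>: "ultrafilter le star \<xi>"
    and a: "a \<in> \<eta> - \<xi>" and max: "\<forall>y\<in>\<eta> - \<xi>. a \<preceq> y \<longrightarrow> y = a"
  shows "\<forall>k\<in>\<xi>. k \<preceq> star a \<longrightarrow> k = star a"
proof (intro ballI impI)
  fix k assume "k \<in> \<xi>" and "k \<preceq> star a"
  then have "a \<preceq> star k"
    using le_star_commute by blast
  then have "star k \<in> \<eta> - \<xi>"
    using a \<open>k \<in> \<xi>\<close> ultrafilter_upward_closed[OF \<eta>] ultrafilter_star_iff[OF \<xi>, of k] by blast
  then have "star k = a"
    using max \<open>a \<preceq> star k\<close> by blast
  then show "k = star a"
    by (metis star_star)
qed

lemma finite_down_set_if_notin_limit: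
  assumes \<Sigma>: "almost_equality_class le star \<Sigma>" and \<xi>: "\<xi> \<in> Hcirc_top le star closure_of \<Sigma>"
    and "k \<notin> \<xi>" and "\<sigma> \<in> \<Sigma>"
  shows "finite {l \<in> \<sigma>. l \<preceq> k}"
proof -
  obtain \<tau> where "\<tau> \<in> \<Sigma>" and "\<tau> \<inter> {k} = \<xi> \<inter> {k}"
    using in_closure_of_Hcirc_top_agree[OF \<xi> almost_equality_class_subset[OF \<Sigma>], of "{k}"] by auto
  then have "k \<notin> \<tau>" and \<tau>: "ultrafilter le star \<tau>"
    using \<open>k \<notin> \<xi>\<close> almost_equality_class_ultrafilter[OF \<Sigma>] by auto
  then have "{l \<in> \<sigma>. l \<preceq> k} \<subseteq> \<sigma> - \<tau>"
    using ultrafilter_upward_closed[OF \<tau>] by blast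
  moreover have "finite (\<sigma> - \<tau>)"
    using almost_equality_class_almost_equal[OF \<Sigma> \<open>\<sigma> \<in> \<Sigma>\<close> \<open>\<tau> \<in> \<Sigma>\<close>] by (simp add: almost_equal_def)
  ultimately show ?thesis
    by (rule finite_subset)
qed

end

locale discrete_omega_poc_set = poc_set +
  assumes discrete: "discrete_pocset le star z"
    and omega: "omega_dimensional le star"
begin

lemma ex_maximal_above:
  assumes "x \<in> A" and "proper_elt star z x" and "proper_elt star z b" and "\<forall>y\<in>A. y \<preceq> b"
  shows "\<exists>m\<in>A. x \<preceq> m \<and> (\<forall>y\<in>A. m \<preceq> y \<longrightarrow> y = m)"
proof -
  have "finite {y. x \<preceq> y \<and> y \<preceq> b}"
    using discrete assms(2,3) unfolding discrete_pocset_def by blast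
  then have "finite {y \<in> A. x \<preceq> y}"
    by (rule finite_subset[rotated]) (use assms(4) in auto)
  moreover have "x \<in> {y \<in> A. x \<preceq> y}"
    using assms(1) by simp
  ultimately obtain m where "m \<in> A" "x \<preceq> m" and "\<forall>y\<in>A. x \<preceq> y \<longrightarrow> m \<preceq> y \<longrightarrow> y = m"
    using finite_has_maximal[of "{y \<in> A. x \<preceq> y}"] by blast
  then show ?thesis
    using trans by blast
qed

lemma finite_down_set:
  assumes \<sigma>: "ultrafilter le star \<sigma>" and b: "proper_elt star z b"
    and below: "\<forall>k\<in>\<sigma>. k \<preceq> b \<and> k \<noteq> b \<longrightarrow> finite {l \<in> \<sigma>. l \<preceq> k}"
  shows "finite {k \<in> \<sigma>. k \<preceq> b}"
proof -
  define D where "D = {k \<in> \<sigma>. k \<preceq> b \<and> k \<noteq> b}"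
  define M where "M = {m \<in> D. \<forall>y\<in>D. m \<preceq> y \<longrightarrow> y = m}"
  have "b \<noteq> star z"
    using b by (simp add: proper_elt_def)
  have "finite M"
  proof (rule ccontr)
    assume "infinite M"
    moreover have "transverse le star m n" if "m \<in> M" "n \<in> M" "m \<noteq> n" for m n
    proof (rule transverse_if_incomparable_below[OF \<sigma> \<open>b \<noteq> star z\<close>])
      show "m \<in> \<sigma>" "n \<in> \<sigma>" "m \<preceq> b" "n \<preceq> b"
        using that by (simp_all add: M_def D_def)
      show "\<not> m \<preceq> n" "\<not> n \<preceq> m"
        using that unfolding M_def by blast+
    qed
    ultimately show False
      using omega unfolding omega_dimensional_def by blast
  qed
  have "\<exists>m\<in>M. x \<preceq> m" if "x \<in> D" for x
  proof -
    have "proper_elt star z x"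
      using proper_elt_if_mem_below[OF \<sigma> _ _ \<open>b \<noteq> star z\<close>] that by (simp add: D_def)
    then show ?thesis
      using ex_maximal_above[OF that _ b] unfolding M_def D_def by auto
  qed
  then have "D \<subseteq> (\<Union>m\<in>M. {l \<in> \<sigma>. l \<preceq> m})"
    unfolding D_def by blast
  moreover have "finite (\<Union>m\<in>M. {l \<in> \<sigma>. l \<preceq> m})"
    using \<open>finite M\<close> below by (auto simp: M_def D_def)
  ultimately have "finite (insert b D)"
    by (simp add: finite_subset)
  then show ?thesis
    by (rule finite_subset[rotated]) (auto simp: D_def)
qed

lemma swap_minimal_in_closure:
  assumes \<Sigma>: "almost_equality_class le star \<Sigma>" and \<xi>: "\<xi> \<in> Hcirc_top le star closure_of \<Sigma>"
    and "b \<in> \<xi>" and min: "\<forall>k\<in>\<xi>. k \<preceq> b \<longrightarrow> k = b" and "b \<noteq> star z"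
  shows "insert (star b) (\<xi> - {b}) \<in> Hcirc_top le star closure_of \<Sigma>"
proof -
  have \<xi>_uf: "ultrafilter le star \<xi>"
    using \<xi> by (rule ultrafilter_if_in_closure_of_Hcirc_top)
  have "proper_elt star z b"
    using proper_elt_if_mem_below[OF \<xi>_uf \<open>b \<in> \<xi>\<close> refl \<open>b \<noteq> star z\<close>] .
  have "insert (star b) (\<xi> - {b}) \<in> Hcirc le star"
    using ultrafilter_swap_minimal[OF \<xi>_uf \<open>b \<in> \<xi>\<close> min \<open>b \<noteq> star z\<close>] by (simp add: Hcirc_def)
  moreover have "\<exists>\<sigma>'\<in>\<Sigma>. \<sigma>' \<inter> F = insert (star b) (\<xi> - {b}) \<inter> F" if "finite F" for F
  proof -
    have "finite (insert b F)"
      using that by simp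
    then obtain \<sigma> where "\<sigma> \<in> \<Sigma>" and agree: "\<sigma> \<inter> insert b F = \<xi> \<inter> insert b F"
      using in_closure_of_Hcirc_top_agree[OF \<xi> almost_equality_class_subset[OF \<Sigma>]] by blast
    then have \<sigma>_uf: "ultrafilter le star \<sigma>"
      using almost_equality_class_ultrafilter[OF \<Sigma>] by blast
    define D where "D = {k \<in> \<sigma>. k \<preceq> b}"
    have "finite D"
      unfolding D_def
    proof (rule finite_down_set[OF \<sigma>_uf \<open>proper_elt star z b\<close>], intro ballI impI)
      fix k assume "k \<in> \<sigma>" "k \<preceq> b \<and> k \<noteq> b"
      then have "k \<notin> \<xi>"
        using min by blast
      then show "finite {l \<in> \<sigma>. l \<preceq> k}"
        using finite_down_set_if_notin_limit[OF \<Sigma> \<xi> _ \<open>\<sigma> \<in> \<Sigma>\<close>] by blast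
    qed
    then have "almost_equal \<sigma> ((\<sigma> - D) \<union> star ` D)"
      unfolding almost_equal_def by (rule finite_subset[rotated]) blast
    then have "(\<sigma> - D) \<union> star ` D \<in> \<Sigma>"
      using almost_equality_class_closed[OF \<Sigma> \<open>\<sigma> \<in> \<Sigma>\<close>]
        ultrafilter_flip_down_set[OF \<sigma>_uf \<open>b \<noteq> star z\<close>] unfolding D_def by blast
    moreover have "((\<sigma> - D) \<union> star ` D) \<inter> F = insert (star b) (\<xi> - {b}) \<inter> F"
      unfolding D_def
      using flip_down_set_agrees_with_swap[OF \<sigma>_uf \<xi>_uf \<open>b \<in> \<xi>\<close> min \<open>b \<noteq> star z\<close> agree] .
    ultimately show ?thesis
      by blast
  qed
  ultimately show ?thesis
    by (simp add: in_closure_of_Hcirc_top[OF almost_equality_class_subset[OF \<Sigma>]])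
qed

lemma almost_equal_in_closure:
  assumes \<Sigma>: "almost_equality_class le star \<Sigma>" and "\<xi> \<in> Hcirc_top le star closure_of \<Sigma>"
    and "ultrafilter le star \<eta>" and "almost_equal \<eta> \<xi>"
  shows "\<eta> \<in> Hcirc_top le star closure_of \<Sigma>"
  using assms(2-)
proof (induction "card (\<eta> - \<xi>)" arbitrary: \<xi>)
  case 0
  have "ultrafilter le star \<xi>"
    using 0(2) by (rule ultrafilter_if_in_closure_of_Hcirc_top)
  moreover have "\<eta> \<subseteq> \<xi>"
    using 0(1,4) by (simp add: almost_equal_def)
  ultimately have "\<eta> = \<xi>"
    using ultrafilter_subset_imp_eq[OF 0(3)] by blast
  then show ?case
    using 0(2) by simp
next
  case (Suc n)
  have \<xi>_uf: "ultrafilter le star \<xi>"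
    using Suc.prems(1) by (rule ultrafilter_if_in_closure_of_Hcirc_top)
  have "finite (\<eta> - \<xi>)"
    using Suc.prems(3) by (simp add: almost_equal_def)
  moreover have "\<eta> - \<xi> \<noteq> {}"
    using Suc.hyps(2) by (metis card.empty Zero_neq_Suc)
  ultimately obtain a where a: "a \<in> \<eta> - \<xi>" and max: "\<forall>y\<in>\<eta> - \<xi>. a \<preceq> y \<longrightarrow> y = a"
    using finite_has_maximal by blast
  have "star a \<in> \<xi>" and "star a \<noteq> star z"
    using a ultrafilter_star_iff[OF \<xi>_uf, of a] zero_notin_ultrafilter[OF Suc.prems(2)] by auto
  define \<xi>' where "\<xi>' = insert a (\<xi> - {star a})"
  have "\<xi>' \<in> Hcirc_top le star closure_of \<Sigma>"
    using swap_minimal_in_closure[OF \<Sigma> Suc.prems(1) \<open>star a \<in> \<xi>\<close>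
        minimal_star_of_maximal_diff[OF Suc.prems(2) \<xi>_uf a max] \<open>star a \<noteq> star z\<close>]
    by (simp add: \<xi>'_def)
  moreover have "\<eta> - \<xi>' = (\<eta> - \<xi>) - {a}"
    using a ultrafilter_star_iff[OF Suc.prems(2), of a] by (auto simp: \<xi>'_def)
  then have "n = card (\<eta> - \<xi>')" and "almost_equal \<eta> \<xi>'"
    using Suc.hyps(2) \<open>finite (\<eta> - \<xi>)\<close> a by (simp_all add: almost_equal_def)
  ultimately show ?case
    using Suc.hyps(1) Suc.prems(2) by blast
qed

end

theorem mainTheorem20:
  fixes le :: "'a \<Rightarrow> 'a \<Rightarrow> bool" and star :: "'a \<Rightarrow> 'a" and z :: 'a
    and \<Sigma> \<Xi> :: "'a set set"
  assumes "pocset le star z"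
    and "discrete_pocset le star z"
    and "omega_dimensional le star"
    and "almost_equality_class le star \<Sigma>"
    and "almost_equality_class le star \<Xi>"
    and "\<Xi> \<inter> (Hcirc_top le star) closure_of \<Sigma> \<noteq> {}"
  shows "\<Xi> \<subseteq> (Hcirc_top le star) closure_of \<Sigma>"
proof
  interpret discrete_omega_poc_set le star z
    using assms(1-3) by unfold_locales
  fix \<eta> assume "\<eta> \<in> \<Xi>"
  obtain \<xi> where "\<xi> \<in> \<Xi>" and "\<xi> \<in> Hcirc_top le star closure_of \<Sigma>"
    using assms(6) by blast
  moreover have "ultrafilter le star \<eta>"
    using almost_equality_class_ultrafilter[OF assms(5) \<open>\<eta> \<in> \<Xi>\<close>] .
  ultimately show "\<eta> \<in> Hcirc_top le star closure_of \<Sigma>"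
    using almost_equal_in_closure[OF assms(4)] almost_equality_class_almost_equal[OF assms(5) \<open>\<eta> \<in> \<Xi>\<close>]
    by simp
qed

end
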